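(* Let $G$, $\mu$, $H_0,\dots,H_M$ be as in the context, and let $(Q_{n+1},P_{n+1})=\Phi_h(Q_n,P_n)$ be the stochastic implicit midpoint integrator defined in the context. Then for any initial value $(Q_0,P_0)\in T^*G$ there exists $R(Q_0,P_0)<\infty$ such that almost surely $$\sup_{h>0}\ \sup_{n\ge 0}\ \|(Q_n,P_n)\|\le R(Q_0,P_0).$$
   Context: $G\subseteq\operatorname{GL}(n,\mathbb{C})$ is a compact simply connected matrix Lie group with $J$-quadratic Lie algebra $\mathfrak{g}$: there is a matrix $J$ with $J^*=\pm J$, $J^2=cI_n$ ($c\in\mathbb{R}\setminus\{0\}$) and $A^*J+JA=0$ for all $A\in\mathfrak{g}$ ($A^*$ = conjugate transpose). $\mathfrak{g}^*$ is identified with $\mathfrak{g}$ via $\langle X,V\rangle=\operatorname{Tr}(X^*V)$ with norm $\|\cdot\|$ (Frobenius); gradients are w.r.t. this inner product. The momentum map is $\mu(Q,P)=\tfrac12Q^*P-\tfrac1{2c}JP^*QJ$. $H_0,\dots,H_M:\mathfrak{g}^*\to\mathbb{R}$ are differentiable. Set $f_i(Q,P)=\tfrac12Q\nabla H_i(\mu(Q,P))$, $k_i(Q,P)=-\tfrac12P\nabla H_i(\mu(Q,P))^*$. Truncated noise: for each $i$ and step $n$, $\xi\sim\mathcal N(0,1)$ with $\xi\sqrt h=W^i(t_n+h)-W^i(t_n)$ ($W^i$ independent Brownian motions), $A_h=\sqrt{2l|\log h|}$ for a fixed positive integer $l$, and $(\zeta_i)_n$ is $\xi$ clipped to $[-A_h,A_h]$.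 The integrator: given $(Q_n,P_n)$, find $(\tilde Q,\tilde P)$ with $Q_n=\tilde Q-\tfrac12(f_0(\tilde Q,\tilde P)h+\sum_i f_i(\tilde Q,\tilde P)(\zeta_i)_n\sqrt h)$, $P_n=\tilde P-\tfrac12(k_0(\tilde Q,\tilde P)h+\sum_ik_i(\tilde Q,\tilde P)(\zeta_i)_n\sqrt h)$, and set $Q_{n+1}=\tilde Q+\tfrac12(f_0h+\sum_if_i(\zeta_i)_n\sqrt h)$, $P_{n+1}=\tilde P+\tfrac12(k_0h+\sum_ik_i(\zeta_i)_n\sqrt h)$, all evaluated at $(\tilde Q,\tilde P)$. *)

theory Defs
  imports "HOL-Analysis.Analysis" "HOL-Probability.Probability"
begin

type_synonym 'n cmat = "complex^'n^'n"

definition ctrans :: "'n::finite cmat \<Rightarrow> 'n cmat" where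
  "ctrans A = (\<chi> i j. cnj (A $ j $ i))"

primrec mpow :: "'n::finite cmat \<Rightarrow> nat \<Rightarrow> 'n cmat" where
  "mpow A 0 = mat 1"
| "mpow A (Suc k) = A ** mpow A k"

definition mexp :: "'n::finite cmat \<Rightarrow> 'n cmat" where
  "mexp A = (\<Sum>k. inverse (fact k) *\<^sub>R mpow A k)"

definition matrix_lie_group :: "'n::finite cmat set \<Rightarrow> bool" where
  "matrix_lie_group G \<longleftrightarrow> G \<subseteq> {A. invertible A} \<and> mat 1 \<in> G \<and>
     (\<forall>A\<in>G. \<forall>B\<in>G. A ** B \<in> G) \<and> (\<forall>A\<in>G. matrix_inv A \<in> G) \<and> closed G"

definition lie_algebra :: "'n::finite cmat set \<Rightarrow> 'n cmat set" where
  "lie_algebra G = {A. \<forall>t::real. mexp (t *\<^sub>R A) \<in> G}"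

text \<open>The pairing <X,V> = Tr(X^* V); as a real inner product we use its real part.\<close>
definition frob :: "'n::finite cmat \<Rightarrow> 'n cmat \<Rightarrow> complex" where
  "frob X V = trace (ctrans X ** V)"

definition momentum :: "'n::finite cmat \<Rightarrow> real \<Rightarrow> 'n cmat \<Rightarrow> 'n cmat \<Rightarrow> 'n cmat" where
  "momentum J c Q P = (1/2) *\<^sub>R (ctrans Q ** P) - (1/(2*c)) *\<^sub>R (J ** ctrans P ** Q ** J)"

definition fvec :: "'n::finite cmat \<Rightarrow> real \<Rightarrow> (nat \<Rightarrow> 'n cmat \<Rightarrow> 'n cmat) \<Rightarrow> nat \<Rightarrow>
    'n cmat \<Rightarrow> 'n cmat \<Rightarrow> 'n cmat" where
  "fvec J c gradH i Q P = (1/2) *\<^sub>R (Q ** gradH i (momentum J c Q P))"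

definition kvec :: "'n::finite cmat \<Rightarrow> real \<Rightarrow> (nat \<Rightarrow> 'n cmat \<Rightarrow> 'n cmat) \<Rightarrow> nat \<Rightarrow>
    'n cmat \<Rightarrow> 'n cmat \<Rightarrow> 'n cmat" where
  "kvec J c gradH i Q P = - ((1/2) *\<^sub>R (P ** ctrans (gradH i (momentum J c Q P))))"

definition midpoint_step :: "'n::finite cmat \<Rightarrow> real \<Rightarrow> (nat \<Rightarrow> 'n cmat \<Rightarrow> 'n cmat) \<Rightarrow> nat \<Rightarrow>
    real \<Rightarrow> (nat \<Rightarrow> real) \<Rightarrow> 'n cmat \<Rightarrow> 'n cmat \<Rightarrow> 'n cmat \<Rightarrow> 'n cmat \<Rightarrow> bool" where
  "midpoint_step J c gradH M h zeta Q P Q' P' \<longleftrightarrow>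
     (\<exists>Qt Pt.
        let F = h *\<^sub>R fvec J c gradH 0 Qt Pt
                + (\<Sum>i\<in>{1..M}. (zeta i * sqrt h) *\<^sub>R fvec J c gradH i Qt Pt);
            K = h *\<^sub>R kvec J c gradH 0 Qt Pt
                + (\<Sum>i\<in>{1..M}. (zeta i * sqrt h) *\<^sub>R kvec J c gradH i Qt Pt)
        in Q = Qt - (1/2) *\<^sub>R F \<and> P = Pt - (1/2) *\<^sub>R K \<and>
           Q' = Qt + (1/2) *\<^sub>R F \<and> P' = Pt + (1/2) *\<^sub>R K)"

definition trunc_level :: "nat \<Rightarrow> real \<Rightarrow> real" where
  "trunc_level l h = sqrt (2 * real l * \<bar>ln h\<bar>)"

definition trunc_noise :: "nat \<Rightarrow> (nat \<Rightarrow> real \<Rightarrow> 'a \<Rightarrow> real) \<Rightarrow> real \<Rightarrow> 'a \<Rightarrow> nat \<Rightarrow> nat \<Rightarrow> real" where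
  "trunc_noise l W h \<omega> n i =
     (let \<xi> = (W i (real n * h + h) \<omega> - W i (real n * h) \<omega>) / sqrt h;
          A = trunc_level l h
      in max (- A) (min A \<xi>))"

definition integrator_seq :: "'n::finite cmat \<Rightarrow> real \<Rightarrow> (nat \<Rightarrow> 'n cmat \<Rightarrow> 'n cmat) \<Rightarrow> nat \<Rightarrow>
    nat \<Rightarrow> (nat \<Rightarrow> real \<Rightarrow> 'a \<Rightarrow> real) \<Rightarrow> real \<Rightarrow> 'a \<Rightarrow>
    (nat \<Rightarrow> 'n cmat) \<Rightarrow> (nat \<Rightarrow> 'n cmat) \<Rightarrow> bool" where
  "integrator_seq J c gradH M l W h \<omega> Q P \<longleftrightarrow>
     (\<forall>n. midpoint_step J c gradH M h (trunc_noise l W h \<omega> n) (Q n) (P n) (Q (Suc n)) (P (Suc n)))"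

definition brownian_motion :: "'a measure \<Rightarrow> (real \<Rightarrow> 'a \<Rightarrow> real) \<Rightarrow> bool" where
  "brownian_motion PS B \<longleftrightarrow>
     prob_space PS \<and>
     (\<forall>t. B t \<in> borel_measurable PS) \<and>
     (AE \<omega> in PS. B 0 \<omega> = 0) \<and>
     (AE \<omega> in PS. continuous_on {0..} (\<lambda>t. B t \<omega>)) \<and>
     (\<forall>s t. 0 \<le> s \<and> s < t \<longrightarrow>
        distributed PS lborel (\<lambda>\<omega>. B t \<omega> - B s \<omega>) (normal_density 0 (sqrt (t - s)))) \<and>
     (\<forall>ts::real list. sorted_wrt (<) ts \<and> (\<forall>t\<in>set ts. 0 \<le> t) \<longrightarrow>
        prob_space.indep_vars PS (\<lambda>_. borel)
          (\<lambda>k \<omega>. B (ts ! Suc k) \<omega> - B (ts ! k) \<omega>) {..<length ts - 1})"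

definition indep_brownian :: "'a measure \<Rightarrow> nat \<Rightarrow> (nat \<Rightarrow> real \<Rightarrow> 'a \<Rightarrow> real) \<Rightarrow> bool" where
  "indep_brownian PS M W \<longleftrightarrow>
     prob_space PS \<and> (\<forall>i\<in>{1..M}. brownian_motion PS (W i)) \<and>
     prob_space.indep_vars PS (\<lambda>_. Pi\<^sub>M (UNIV :: real set) (\<lambda>_. borel))
        (\<lambda>i \<omega>. \<lambda>t. W i t \<omega>) {1..M}"

end

theory Submission
  imports Defs
begin

text \<open>
  A compact matrix group G carries positive definite S and T with g^* S g = S and g T g^* = T
  for all g in G.  Without Haar measure, S is found as the unique minimiser, on the convex hull
  of {g^* g | g in G}, of X \<mapsto> sup_g ||g^* X g||^2: this function is invariant under
  X \<mapsto> h^* X h for h in G, and uniformly convex because G is bounded and closed under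
  inverses.  T comes from the same construction for the group {g^* | g in G}.  Differentiating
  t \<mapsto> exp(tA)^* S exp(tA) at 0 gives A^* S + S A = 0, and likewise A T + T A^* = 0, for every
  A in the Lie algebra.  One midpoint step reads Q_n = Q'(1 - b), Q_(n+1) = Q'(1 + b),
  P_n = P'(1 + b^*), P_(n+1) = P'(1 - b^*), with b a real combination of gradients, which lie in
  the Lie algebra; so Q T Q^* and P S P^* are conserved exactly, whatever the step size and the
  noise.  As tr(Q T Q^*) and tr(P S P^*) dominate multiples of ||Q||^2 and ||P||^2, all iterates
  lie in one ellipsoid fixed by (Q_0, P_0), for every noise path.
\<close>

lemma norm_cmat_sq: "(norm (A::'n::finite cmat))\<^sup>2 = (\<Sum>i\<in>UNIV. \<Sum>j\<in>UNIV. (cmod (A$i$j))\<^sup>2)"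
  by (simp add: power2_norm_eq_inner inner_vec_def)

lemma cmod_sum_mult_sq_le:
  fixes a b :: "'k \<Rightarrow> complex"
  shows "(cmod (\<Sum>k\<in>K. a k * b k))\<^sup>2 \<le> (\<Sum>k\<in>K. (cmod (a k))\<^sup>2) * (\<Sum>k\<in>K. (cmod (b k))\<^sup>2)"
proof -
  have "cmod (\<Sum>k\<in>K. a k * b k) \<le> (\<Sum>k\<in>K. \<bar>cmod (a k)\<bar> * \<bar>cmod (b k)\<bar>)"
    by (simp add: norm_mult order_trans[OF norm_sum])
  also have "\<dots> \<le> L2_set (\<lambda>k. cmod (a k)) K * L2_set (\<lambda>k. cmod (b k)) K"
    by (rule L2_set_mult_ineq)
  finally have "(cmod (\<Sum>k\<in>K. a k * b k))\<^sup>2 \<le> (L2_set (\<lambda>k. cmod (a k)) K * L2_set (\<lambda>k. cmod (b k)) K)\<^sup>2"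
    by (rule power_mono) simp
  then show ?thesis
    by (simp add: power_mult_distrib L2_set_def sum_nonneg)
qed

lemma norm_matrix_mult_le: "norm ((A::'n::finite cmat) ** (B::'n cmat)) \<le> norm A * norm B"
proof -
  have "(norm (A ** B))\<^sup>2 = (\<Sum>i\<in>UNIV. \<Sum>j\<in>UNIV. (cmod (\<Sum>k\<in>UNIV. A$i$k * B$k$j))\<^sup>2)"
    by (subst norm_cmat_sq) (simp add: matrix_matrix_mult_def)
  also have "\<dots> \<le> (\<Sum>i\<in>UNIV. \<Sum>j\<in>UNIV. (\<Sum>k\<in>UNIV. (cmod (A$i$k))\<^sup>2) * (\<Sum>k\<in>UNIV. (cmod (B$k$j))\<^sup>2))"
    by (intro sum_mono cmod_sum_mult_sq_le)
  also have "\<dots> = (\<Sum>i\<in>UNIV. \<Sum>k\<in>UNIV. (cmod (A$i$k))\<^sup>2) * (\<Sum>j\<in>UNIV. \<Sum>k\<in>UNIV. (cmod (B$k$j))\<^sup>2)"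
    by (rule sum_product[symmetric])
  also have "\<dots> = (norm A * norm B)\<^sup>2"
    by (simp only: power_mult_distrib norm_cmat_sq sum.swap[of "\<lambda>j k. (cmod (B$k$j))\<^sup>2"])
  finally show ?thesis
    by (rule power2_le_imp_le) simp
qed

lemma matrix_add_rdistrib: "((A::'n::finite cmat) + B) ** C = A ** C + B ** C"
  by (vector matrix_matrix_mult_def sum.distrib[symmetric] field_simps)

lemma matrix_diff_ldistrib: "(A::'n::finite cmat) ** (B - C) = A ** B - A ** C"
  by (vector matrix_matrix_mult_def sum_subtractf[symmetric] field_simps)

lemma matrix_diff_rdistrib: "((A::'n::finite cmat) - B) ** C = A ** C - B ** C"
  by (vector matrix_matrix_mult_def sum_subtractf[symmetric] field_simps)

lemma matrix_sum_ldistrib: "(B::'n::finite cmat) ** sum f S = (\<Sum>x\<in>S. B ** f x)"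
  by (induction S rule: infinite_finite_induct) (auto simp: matrix_add_ldistrib)

lemmas matrix_ring_simps = matrix_add_ldistrib matrix_add_rdistrib matrix_diff_ldistrib
  matrix_diff_rdistrib scalar_matrix_assoc[symmetric] matrix_scalar_ac matrix_mul_assoc

lemma bounded_bilinear_matrix_mult: "bounded_bilinear ((**) :: 'n::finite cmat \<Rightarrow> 'n cmat \<Rightarrow> 'n cmat)"
proof (rule bounded_bilinear.intro)
  show "\<exists>K. \<forall>(A::'n cmat) (B::'n cmat). norm (A ** B) \<le> norm A * norm B * K"
    by (rule exI[of _ 1]) (simp add: norm_matrix_mult_le)
qed (simp_all add: matrix_ring_simps)

lemma norm_matrix_mult3_le: "norm ((X::'n::finite cmat) ** (Y::'n cmat) ** (Z::'n cmat)) \<le> norm X * norm Y * norm Z"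
  using norm_matrix_mult_le[of "X ** Y" Z] mult_right_mono[OF norm_matrix_mult_le[of X Y], of "norm Z"]
  by simp

lemma ctrans_ctrans [simp]: "ctrans (ctrans A) = A"
  by (simp add: ctrans_def vec_eq_iff)

lemma ctrans_matrix_mult: "ctrans ((A::'n::finite cmat) ** B) = ctrans B ** ctrans A"
  by (simp add: ctrans_def matrix_matrix_mult_def vec_eq_iff mult.commute)

lemma ctrans_add [simp]: "ctrans (A + B) = ctrans A + ctrans B"
  and ctrans_diff [simp]: "ctrans (A - B) = ctrans A - ctrans B"
  and ctrans_uminus [simp]: "ctrans (- A) = - ctrans A"
  and ctrans_zero [simp]: "ctrans 0 = 0"
  and ctrans_scaleR [simp]: "ctrans (r *\<^sub>R A) = r *\<^sub>R ctrans A"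
  and ctrans_mat1 [simp]: "ctrans (mat 1 :: 'n::finite cmat) = mat 1"
  by (simp_all add: ctrans_def mat_def vec_eq_iff)

lemma ctrans_sum: "ctrans (sum f S) = (\<Sum>x\<in>S. ctrans (f x))"
  by (induction S rule: infinite_finite_induct) (auto simp: ctrans_def vec_eq_iff)

lemma norm_ctrans [simp]: "norm (ctrans (A::'n::finite cmat)) = norm A"
proof -
  have "(norm (ctrans A))\<^sup>2 = (norm A)\<^sup>2"
    unfolding norm_cmat_sq ctrans_def by (simp add: sum.swap[of "\<lambda>i j. (cmod (A$j$i))\<^sup>2"])
  then show ?thesis
    by (simp add: power2_eq_iff_nonneg)
qed

lemma bounded_linear_ctrans: "bounded_linear (ctrans :: 'n::finite cmat \<Rightarrow> 'n cmat)"
  by (rule bounded_linear_intro[where K = 1]) auto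

lemma Re_trace_mult_ctrans: "Re (trace ((Y::'n::finite cmat) ** ctrans Y)) = (norm Y)\<^sup>2"
  by (simp add: trace_def matrix_matrix_mult_def ctrans_def norm_cmat_sq complex_mult_cnj
      cmod_power2 flip: of_real_power)

lemma linear_Re_trace_congruence: "linear (\<lambda>Y. Re (trace ((X::'n::finite cmat) ** Y ** ctrans X)))"
  by (rule linearI) (simp_all add: matrix_ring_simps trace_def sum.distrib sum_distrib_left)

definition congruence :: "'n::finite cmat \<Rightarrow> 'n cmat \<Rightarrow> 'n cmat" where
  "congruence g X = ctrans g ** X ** g"

lemma linear_congruence: "linear (congruence g)"
  by (rule linearI) (simp_all add: congruence_def matrix_ring_simps)

lemma congruence_matrix_mult: "congruence (g ** h) X = congruence h (congruence g X)"
  by (simp add: congruence_def ctrans_matrix_mult matrix_mul_assoc)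

lemma congruence_mat1 [simp]: "congruence (mat 1) X = X"
  by (simp add: congruence_def)

lemma norm_congruence_le: "norm (congruence g X) \<le> (norm g)\<^sup>2 * norm X"
  using norm_matrix_mult3_le[of "ctrans g" X g] by (simp add: congruence_def power2_eq_square mult_ac)

lemma norm_sq_affine_combination:
  fixes a b :: "'a::real_inner"
  shows "(norm ((1 - u) *\<^sub>R a + u *\<^sub>R b))\<^sup>2 =
           (1 - u) * (norm a)\<^sup>2 + u * (norm b)\<^sup>2 - u * (1 - u) * (norm (a - b))\<^sup>2"
  by (simp add: power2_norm_eq_inner inner_add_left inner_add_right inner_diff_left
      inner_diff_right inner_commute algebra_simps)

lemma norm_congruence_sq_combination:
  "(norm (congruence g ((1 - u) *\<^sub>R X + u *\<^sub>R Y)))\<^sup>2 =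
     (1 - u) * (norm (congruence g X))\<^sup>2 + u * (norm (congruence g Y))\<^sup>2
     - u * (1 - u) * (norm (congruence g (X - Y)))\<^sup>2"
proof -
  have "congruence g ((1 - u) *\<^sub>R X + u *\<^sub>R Y) = (1 - u) *\<^sub>R congruence g X + u *\<^sub>R congruence g Y"
    "congruence g (X - Y) = congruence g X - congruence g Y"
    using linear_congruence[of g] by (simp_all add: linear_add linear_cmul linear_diff)
  then show ?thesis
    by (simp only: norm_sq_affine_combination)
qed

definition compact_matrix_group :: "'n::finite cmat set \<Rightarrow> bool" where
  "compact_matrix_group G \<longleftrightarrow> compact G \<and> mat 1 \<in> G \<and> (\<forall>g\<in>G. \<forall>h\<in>G. g ** h \<in> G) \<and>
     (\<forall>g\<in>G. \<exists>h\<in>G. h ** g = mat 1 \<and> g ** h = mat 1)"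

lemma matrix_lie_group_compact_imp_compact_matrix_group:
  assumes "matrix_lie_group G" "compact G"
  shows "compact_matrix_group G"
proof -
  have "g ** matrix_inv g = mat 1 \<and> matrix_inv g ** g = mat 1" if "g \<in> G" for g
  proof -
    have "\<exists>A'. g ** A' = mat 1 \<and> A' ** g = mat 1"
      using assms(1) that unfolding matrix_lie_group_def invertible_def by blast
    then show ?thesis
      unfolding matrix_inv_def by (rule someI_ex)
  qed
  then show ?thesis
    using assms unfolding matrix_lie_group_def compact_matrix_group_def by blast
qed

lemma compact_matrix_group_ctrans_image:
  assumes "compact_matrix_group G"
  shows "compact_matrix_group (ctrans ` G)"
proof -
  have "compact (ctrans ` G)"
    using assms bounded_linear_ctrans unfolding compact_matrix_group_def
    by (blast intro: compact_continuous_image linear_continuous_on)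
  moreover have "mat 1 \<in> ctrans ` G"
    using assms unfolding compact_matrix_group_def by (metis ctrans_mat1 image_eqI)
  moreover have "\<forall>g\<in>ctrans ` G. \<forall>h\<in>ctrans ` G. g ** h \<in> ctrans ` G"
    using assms unfolding compact_matrix_group_def by (auto simp flip: ctrans_matrix_mult)
  moreover have "\<exists>h\<in>ctrans ` G. h ** ctrans g = mat 1 \<and> ctrans g ** h = mat 1" if "g \<in> G" for g
  proof -
    obtain h where "h \<in> G" "h ** g = mat 1" "g ** h = mat 1"
      using assms \<open>g \<in> G\<close> unfolding compact_matrix_group_def by blast
    then show ?thesis
      by (metis ctrans_mat1 ctrans_matrix_mult image_eqI)
  qed
  ultimately show ?thesis
    unfolding compact_matrix_group_def by blast
qed

lemma fixed_point_of_strictly_convex_minimiser: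
  fixes f :: "'a::real_normed_vector \<Rightarrow> real" and \<sigma> :: "'i \<Rightarrow> 'a \<Rightarrow> 'a"
  assumes "compact C" "convex C" "C \<noteq> {}" "continuous_on C f"
    and strict: "\<And>x y. x \<in> C \<Longrightarrow> y \<in> C \<Longrightarrow> x \<noteq> y \<Longrightarrow> f (midpoint x y) < (f x + f y) / 2"
    and maps: "\<And>i x. i \<in> I \<Longrightarrow> x \<in> C \<Longrightarrow> \<sigma> i x \<in> C"
    and decreases: "\<And>i x. i \<in> I \<Longrightarrow> x \<in> C \<Longrightarrow> f (\<sigma> i x) \<le> f x"
  obtains x where "x \<in> C" "\<And>i. i \<in> I \<Longrightarrow> \<sigma> i x = x"
proof -
  obtain x where x: "x \<in> C" "\<And>y. y \<in> C \<Longrightarrow> f x \<le> f y"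
    using continuous_attains_inf[OF assms(1,3,4)] by blast
  have "\<sigma> i x = x" if i: "i \<in> I" for i
  proof (rule ccontr)
    assume "\<sigma> i x \<noteq> x"
    then have "f (midpoint (\<sigma> i x) x) < (f (\<sigma> i x) + f x) / 2"
      using strict maps i x(1) by blast
    also have "\<dots> \<le> f x"
      using decreases[OF i x(1)] by simp
    finally have "f (midpoint (\<sigma> i x) x) < f x" .
    moreover have "midpoint (\<sigma> i x) x \<in> C"
      using convexD[OF \<open>convex C\<close>, of "\<sigma> i x" x "1/2" "1/2"] maps i x(1)
      by (simp add: midpoint_def scaleR_add_right)
    ultimately show False
      using x(2) by fastforce
  qed
  then show thesis
    using x(1) that by blast
qed

definition gram_hull :: "'n::finite cmat set \<Rightarrow> 'n cmat set" where
  "gram_hull G = convex hull ((\<lambda>g. congruence g (mat 1)) ` G)"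

lemma compact_gram_hull:
  assumes "compact G"
  shows "compact (gram_hull G)"
proof -
  have "continuous_on G (\<lambda>g. congruence g (mat 1))"
    unfolding congruence_def matrix_mul_rid
    by (intro bounded_bilinear.continuous_on[OF bounded_bilinear_matrix_mult]
        bounded_linear.continuous_on[OF bounded_linear_ctrans] continuous_on_id)
  then show ?thesis
    unfolding gram_hull_def using assms by (intro compact_convex_hull compact_continuous_image)
qed

definition sup_congruence_sq :: "'n::finite cmat set \<Rightarrow> 'n cmat \<Rightarrow> real" where
  "sup_congruence_sq G X = (SUP g\<in>G. (norm (congruence g X))\<^sup>2)"

context
  fixes G :: "'n::finite cmat set" and K :: real
  assumes group: "compact_matrix_group G" and bound: "\<And>g. g \<in> G \<Longrightarrow> norm g \<le> K"
begin

lemma norm_bound_pos: "K > 0"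
proof -
  have "mat 1 \<noteq> (0 :: 'n cmat)"
    by (auto simp: vec_eq_iff mat_def)
  then show ?thesis
    using group bound unfolding compact_matrix_group_def by (meson zero_less_norm_iff order_less_le_trans)
qed

lemma norm_le_congruence:
  assumes "g \<in> G"
  shows "norm X \<le> K\<^sup>2 * norm (congruence g X)"
proof -
  obtain h where h: "h \<in> G" "g ** h = mat 1"
    using group assms unfolding compact_matrix_group_def by blast
  have "norm X = norm (congruence h (congruence g X))"
    by (simp flip: congruence_matrix_mult add: h(2))
  also have "\<dots> \<le> (norm h)\<^sup>2 * norm (congruence g X)"
    by (rule norm_congruence_le)
  also have "\<dots> \<le> K\<^sup>2 * norm (congruence g X)"
    using bound[OF h(1)] by (intro mult_right_mono power_mono) auto
  finally show ?thesis .
qed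

lemma sup_congruence_sq_upper:
  assumes "g \<in> G"
  shows "(norm (congruence g X))\<^sup>2 \<le> sup_congruence_sq G X"
proof -
  have "(norm (congruence h X))\<^sup>2 \<le> (K\<^sup>2 * norm X)\<^sup>2" if "h \<in> G" for h
  proof -
    have "(norm h)\<^sup>2 * norm X \<le> K\<^sup>2 * norm X"
      using bound[OF that] by (intro mult_right_mono power_mono) auto
    then show ?thesis
      using norm_congruence_le[of h X] by (intro power_mono) auto
  qed
  then have "bdd_above ((\<lambda>h. (norm (congruence h X))\<^sup>2) ` G)"
    by (intro bdd_aboveI2) blast
  then show ?thesis
    unfolding sup_congruence_sq_def using assms by (rule cSUP_upper[rotated])
qed

lemma sup_congruence_sq_least:
  assumes "\<And>g. g \<in> G \<Longrightarrow> (norm (congruence g X))\<^sup>2 \<le> c"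
  shows "sup_congruence_sq G X \<le> c"
  unfolding sup_congruence_sq_def
  using group assms unfolding compact_matrix_group_def by (intro cSUP_least) auto

lemma convex_on_sup_congruence_sq: "convex_on UNIV (sup_congruence_sq G)"
proof (rule convex_onI)
  fix t :: real and X Y :: "'n cmat"
  assume t: "0 < t" "t < 1"
  show "sup_congruence_sq G ((1 - t) *\<^sub>R X + t *\<^sub>R Y) \<le> (1 - t) * sup_congruence_sq G X + t * sup_congruence_sq G Y"
  proof (rule sup_congruence_sq_least)
    fix g assume "g \<in> G"
    have "(norm (congruence g ((1 - t) *\<^sub>R X + t *\<^sub>R Y)))\<^sup>2
        \<le> (1 - t) * (norm (congruence g X))\<^sup>2 + t * (norm (congruence g Y))\<^sup>2"
      unfolding norm_congruence_sq_combination using t by simp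
    also have "\<dots> \<le> (1 - t) * sup_congruence_sq G X + t * sup_congruence_sq G Y"
      using t sup_congruence_sq_upper[OF \<open>g \<in> G\<close>] by (intro add_mono mult_left_mono) auto
    finally show "(norm (congruence g ((1 - t) *\<^sub>R X + t *\<^sub>R Y)))\<^sup>2
        \<le> (1 - t) * sup_congruence_sq G X + t * sup_congruence_sq G Y" .
  qed
qed simp

lemma sup_congruence_sq_midpoint:
  "sup_congruence_sq G (midpoint X Y)
     \<le> (sup_congruence_sq G X + sup_congruence_sq G Y) / 2 - (norm (X - Y) / K\<^sup>2)\<^sup>2 / 4"
proof (rule sup_congruence_sq_least)
  fix g assume g: "g \<in> G"
  have sq: "(norm (X - Y) / K\<^sup>2)\<^sup>2 \<le> (norm (congruence g (X - Y)))\<^sup>2"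
    using norm_le_congruence[OF g, of "X - Y"] norm_bound_pos by (intro power_mono) (auto simp: field_simps)
  have "(norm (congruence g (midpoint X Y)))\<^sup>2 = (norm (congruence g X))\<^sup>2 / 2
      + (norm (congruence g Y))\<^sup>2 / 2 - (norm (congruence g (X - Y)))\<^sup>2 / 4"
    using norm_congruence_sq_combination[of g "1/2" X Y] by (simp add: midpoint_def scaleR_add_right)
  then show "(norm (congruence g (midpoint X Y)))\<^sup>2
      \<le> (sup_congruence_sq G X + sup_congruence_sq G Y) / 2 - (norm (X - Y) / K\<^sup>2)\<^sup>2 / 4"
    using sq sup_congruence_sq_upper[OF g, of X] sup_congruence_sq_upper[OF g, of Y] by argo
qed

lemma sup_congruence_sq_congruence:
  assumes "h \<in> G"
  shows "sup_congruence_sq G (congruence h X) \<le> sup_congruence_sq G X"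
proof (rule sup_congruence_sq_least)
  fix g assume "g \<in> G"
  then have "h ** g \<in> G"
    using group assms unfolding compact_matrix_group_def by blast
  then show "(norm (congruence g (congruence h X)))\<^sup>2 \<le> sup_congruence_sq G X"
    by (simp add: sup_congruence_sq_upper flip: congruence_matrix_mult)
qed

lemma norm_le_mult_ctrans:
  fixes X :: "'n cmat"
  assumes "g \<in> G"
  shows "norm X \<le> K * norm (X ** ctrans g)"
proof -
  obtain h where h: "h \<in> G" "h ** g = mat 1"
    using group assms unfolding compact_matrix_group_def by blast
  have "X = X ** ctrans (h ** g)"
    by (simp add: h(2))
  then have "norm X = norm ((X ** ctrans g) ** ctrans h)"
    by (simp add: ctrans_matrix_mult matrix_mul_assoc)
  also have "\<dots> \<le> norm (X ** ctrans g) * norm h"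
    using norm_matrix_mult_le[of "X ** ctrans g" "ctrans h"] by simp
  also have "\<dots> \<le> norm (X ** ctrans g) * K"
    using bound[OF h(1)] by (simp add: mult_left_mono)
  finally show ?thesis
    by (simp add: mult.commute)
qed

lemma gram_hull_congruence:
  assumes "h \<in> G" "Y \<in> gram_hull G"
  shows "congruence h Y \<in> gram_hull G"
proof -
  have "congruence h ` (\<lambda>g. congruence g (mat 1)) ` G \<subseteq> (\<lambda>g. congruence g (mat 1)) ` G"
    using group \<open>h \<in> G\<close> unfolding compact_matrix_group_def
    by (auto simp flip: congruence_matrix_mult)
  then have "congruence h ` gram_hull G \<subseteq> gram_hull G"
    unfolding gram_hull_def convex_hull_linear_image[OF linear_congruence] by (rule hull_mono)
  then show ?thesis
    using \<open>Y \<in> gram_hull G\<close> by blast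
qed

lemma gram_hull_coercive:
  assumes "Y \<in> gram_hull G"
  shows "(norm X)\<^sup>2 \<le> K\<^sup>2 * Re (trace (X ** Y ** ctrans X))"
proof -
  define P where "P = (\<Inter>X::'n cmat. (\<lambda>Y. Re (trace (X ** Y ** ctrans X))) -` {(norm X)\<^sup>2 / K\<^sup>2..})"
  have "gram_hull G \<subseteq> P"
    unfolding gram_hull_def
  proof (rule hull_minimal)
    show "(\<lambda>g. congruence g (mat 1)) ` G \<subseteq> P"
    proof (clarsimp simp: P_def)
      fix g X assume "g \<in> G"
      have "X ** congruence g (mat 1) ** ctrans X = (X ** ctrans g) ** ctrans (X ** ctrans g)"
        by (simp add: congruence_def ctrans_matrix_mult matrix_mul_assoc)
      moreover have "(norm X / K)\<^sup>2 \<le> (norm (X ** ctrans g))\<^sup>2"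
        using norm_le_mult_ctrans[OF \<open>g \<in> G\<close>, of X] norm_bound_pos
        by (intro power_mono) (auto simp: field_simps)
      ultimately show "(norm X)\<^sup>2 / K\<^sup>2 \<le> Re (trace (X ** congruence g (mat 1) ** ctrans X))"
        by (simp add: Re_trace_mult_ctrans power_divide)
    qed
    show "convex P"
      unfolding P_def by (intro convex_INT convex_linear_vimage linear_Re_trace_congruence) simp
  qed
  then show ?thesis
    using assms norm_bound_pos unfolding P_def by (auto simp: field_simps)
qed

lemma exists_invariant_form:
  obtains S where "\<And>g. g \<in> G \<Longrightarrow> congruence g S = S"
    and "\<And>X. (norm X)\<^sup>2 \<le> K\<^sup>2 * Re (trace (X ** S ** ctrans X))"
proof -
  obtain S where "S \<in> gram_hull G" "\<And>g. g \<in> G \<Longrightarrow> congruence g S = S"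
  proof (rule fixed_point_of_strictly_convex_minimiser[where f = "sup_congruence_sq G" and \<sigma> = congruence])
    show "compact (gram_hull G)"
      using group unfolding compact_matrix_group_def by (simp add: compact_gram_hull)
    show "convex (gram_hull G)" "gram_hull G \<noteq> {}"
      using group unfolding gram_hull_def compact_matrix_group_def by auto
    show "continuous_on (gram_hull G) (sup_congruence_sq G)"
      using convex_on_continuous[OF open_UNIV convex_on_sup_congruence_sq] by (rule continuous_on_subset) simp
    show "sup_congruence_sq G (midpoint X Y) < (sup_congruence_sq G X + sup_congruence_sq G Y) / 2"
      if "X \<noteq> Y" for X Y
    proof -
      have "0 < (norm (X - Y) / K\<^sup>2)\<^sup>2 / 4"
        using that norm_bound_pos by simp
      then show ?thesis
        using sup_congruence_sq_midpoint[of X Y] by argo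
    qed
    show "congruence g X \<in> gram_hull G" if "g \<in> G" "X \<in> gram_hull G" for g X
      using that by (rule gram_hull_congruence)
    show "sup_congruence_sq G (congruence g X) \<le> sup_congruence_sq G X" if "g \<in> G" for g X
      using that by (rule sup_congruence_sq_congruence)
  qed (rule that)
  then show thesis
    using that gram_hull_coercive by blast
qed

end

lemma compact_matrix_group_invariant_form:
  assumes "compact_matrix_group G"
  obtains S \<epsilon> where "\<epsilon> > 0" "\<And>g. g \<in> G \<Longrightarrow> congruence g S = S"
    and "\<And>X. \<epsilon> * (norm X)\<^sup>2 \<le> Re (trace (X ** S ** ctrans X))"
proof -
  obtain K where K: "\<And>g. g \<in> G \<Longrightarrow> norm g \<le> K"
  proof -
    have "bounded G"
      using assms compact_imp_bounded unfolding compact_matrix_group_def by blast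
    then show ?thesis
      using that unfolding bounded_iff by blast
  qed
  obtain S where "\<And>g. g \<in> G \<Longrightarrow> congruence g S = S"
    and "\<And>X. (norm X)\<^sup>2 \<le> K\<^sup>2 * Re (trace (X ** S ** ctrans X))"
    using exists_invariant_form[OF assms K] by blast
  moreover have "K > 0"
    using norm_bound_pos[OF assms K] .
  ultimately show thesis
    using that[of "1 / K\<^sup>2" S] by (simp add: field_simps)
qed

lemma mpow_scaleR: "mpow (t *\<^sub>R A) k = t ^ k *\<^sub>R mpow (A::'n::finite cmat) k"
  by (induction k) (simp_all add: scalar_matrix_assoc[symmetric] matrix_scalar_ac)

lemma norm_mpow_le: "norm (mpow (A::'n::finite cmat) k) \<le> norm A ^ k * norm (mat 1 :: 'n cmat)"
proof (induction k)
  case (Suc k)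
  have "norm (mpow A (Suc k)) \<le> norm A * norm (mpow A k)"
    by (simp add: norm_matrix_mult_le)
  also have "\<dots> \<le> norm A * (norm A ^ k * norm (mat 1 :: 'n cmat))"
    using Suc by (intro mult_left_mono) auto
  finally show ?case
    by (simp add: mult_ac)
qed simp

lemma norm_mexp_term_le:
  "norm (inverse (fact k) *\<^sub>R mpow (t *\<^sub>R A) k)
     \<le> norm (mat 1 :: 'n cmat) * (inverse (fact k) * (\<bar>t\<bar> * norm (A::'n::finite cmat)) ^ k)"
proof -
  have "norm (inverse (fact k) *\<^sub>R mpow (t *\<^sub>R A) k) = inverse (fact k) * \<bar>t\<bar> ^ k * norm (mpow A k)"
    by (simp add: mpow_scaleR abs_mult power_abs)
  also have "\<dots> \<le> inverse (fact k) * \<bar>t\<bar> ^ k * (norm A ^ k * norm (mat 1 :: 'n cmat))"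
    by (intro mult_left_mono norm_mpow_le) auto
  finally show ?thesis
    by (simp add: power_mult_distrib mult_ac)
qed

lemma norm_mexp_tail_term_le:
  fixes A :: "'n::finite cmat"
  assumes "\<bar>t\<bar> \<le> 1"
  shows "norm (inverse (fact (n + 2)) *\<^sub>R mpow (t *\<^sub>R A) (n + 2))
           \<le> t\<^sup>2 * (norm (mat 1 :: 'n cmat) * (norm A)\<^sup>2 * (inverse (fact n) * norm A ^ n))"
proof -
  have "\<bar>t\<bar> ^ n * t\<^sup>2 \<le> t\<^sup>2"
    using assms by (simp add: power_le_one mult_left_le_one_le)
  then have "\<bar>t\<bar> ^ (n + 2) \<le> t\<^sup>2"
    by (simp only: power_add power2_abs)
  then have "(\<bar>t\<bar> * norm A) ^ (n + 2) \<le> t\<^sup>2 * ((norm A)\<^sup>2 * norm A ^ n)"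
    by (simp only: power_mult_distrib power_add[of "norm A"] mult.commute[of "norm A ^ n"])
      (intro mult_right_mono, simp_all)
  moreover have "inverse (fact (n + 2)) \<le> (inverse (fact n) :: real)"
    by (intro le_imp_inverse_le fact_mono) auto
  ultimately have "inverse (fact (n + 2)) * (\<bar>t\<bar> * norm A) ^ (n + 2)
      \<le> inverse (fact n) * (t\<^sup>2 * ((norm A)\<^sup>2 * norm A ^ n))"
    by (intro mult_mono) auto
  then have "norm (mat 1 :: 'n cmat) * (inverse (fact (n + 2)) * (\<bar>t\<bar> * norm A) ^ (n + 2))
      \<le> norm (mat 1 :: 'n cmat) * (inverse (fact n) * (t\<^sup>2 * ((norm A)\<^sup>2 * norm A ^ n)))"
    by (rule mult_left_mono) simp
  also have "\<dots> = t\<^sup>2 * (norm (mat 1 :: 'n cmat) * (norm A)\<^sup>2 * (inverse (fact n) * norm A ^ n))"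
    by (simp only: mult_ac)
  finally show ?thesis
    using norm_mexp_term_le[of "n + 2" t A] by (rule order_trans[rotated])
qed

lemma mexp_quadratic_remainder:
  fixes A :: "'n::finite cmat"
  obtains C where "\<And>t. \<bar>t\<bar> \<le> 1 \<Longrightarrow> norm (mexp (t *\<^sub>R A) - mat 1 - t *\<^sub>R A) \<le> C * t\<^sup>2"
proof -
  define b where "b n = norm (mat 1 :: 'n cmat) * (norm A)\<^sup>2 * (inverse (fact n) * norm A ^ n)" for n
  have b: "summable b"
    unfolding b_def by (intro summable_mult summable_exp)
  have "norm (mexp (t *\<^sub>R A) - mat 1 - t *\<^sub>R A) \<le> suminf b * t\<^sup>2" if t: "\<bar>t\<bar> \<le> 1" for t
  proof -
    define f where "f k = inverse (fact k) *\<^sub>R mpow (t *\<^sub>R A) k" for k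
    have tail: "norm (f (n + 2)) \<le> t\<^sup>2 * b n" for n
      unfolding f_def b_def by (rule norm_mexp_tail_term_le[OF t])
    then have tail_summable: "summable (\<lambda>n. norm (f (n + 2)))"
      by (intro summable_comparison_test[OF _ summable_mult[OF b]]) auto
    have "summable f"
      using norm_mexp_term_le unfolding f_def
      by (intro summable_comparison_test[OF _ summable_mult[OF summable_exp]]) blast
    then have "mexp (t *\<^sub>R A) = (\<Sum>n. f (n + 2)) + (\<Sum>i<2. f i)"
      unfolding mexp_def f_def[symmetric] by (rule suminf_split_initial_segment)
    also have "(\<Sum>i<2. f i) = mat 1 + t *\<^sub>R A"
      by (simp add: f_def numeral_2_eq_2)
    finally have "norm (mexp (t *\<^sub>R A) - mat 1 - t *\<^sub>R A) \<le> (\<Sum>n. norm (f (n + 2)))"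
      using summable_norm[OF tail_summable] by simp
    also have "\<dots> \<le> (\<Sum>n. t\<^sup>2 * b n)"
      by (rule suminf_le[OF tail tail_summable summable_mult[OF b]])
    also have "\<dots> = suminf b * t\<^sup>2"
      by (subst suminf_mult[OF b]) (rule mult.commute)
    finally show ?thesis .
  qed
  then show thesis
    using that by blast
qed

lemma has_vector_derivative_at_0_if_quadratic_remainder:
  fixes E :: "real \<Rightarrow> 'a::real_normed_vector"
  assumes remainder: "\<And>t. \<bar>t\<bar> \<le> 1 \<Longrightarrow> norm (E t - E 0 - t *\<^sub>R A) \<le> C * t\<^sup>2"
  shows "(E has_vector_derivative A) (at 0)"
  unfolding has_vector_derivative_def has_derivative_at_alt
proof (intro conjI allI impI bounded_linear_scaleR_left)
  fix e :: real
  assume "e > 0"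
  define d where "d = min 1 (e / (\<bar>C\<bar> + 1))"
  have "norm (E t - E 0 - t *\<^sub>R A) \<le> e * norm t" if "norm t < d" for t
  proof -
    have "\<bar>C\<bar> * \<bar>t\<bar> \<le> (\<bar>C\<bar> + 1) * (e / (\<bar>C\<bar> + 1))"
      using that \<open>e > 0\<close> unfolding d_def by (intro mult_mono) auto
    then have "\<bar>C\<bar> * \<bar>t\<bar> * \<bar>t\<bar> \<le> e * \<bar>t\<bar>"
      by (simp add: mult_right_mono)
    moreover have "C * t\<^sup>2 \<le> \<bar>C\<bar> * \<bar>t\<bar> * \<bar>t\<bar>"
      by (simp add: power2_eq_square abs_mult[symmetric] mult.assoc)
    ultimately show ?thesis
      using remainder[of t] that unfolding d_def by simp
  qed
  moreover have "d > 0"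
    using \<open>e > 0\<close> unfolding d_def by simp
  ultimately show "\<exists>d>0. \<forall>t. norm (t - 0) < d \<longrightarrow> norm (E t - E 0 - (t - 0) *\<^sub>R A) \<le> e * norm (t - 0)"
    by auto
qed

lemma mexp_zero [simp]: "mexp (0 :: 'n::finite cmat) = mat 1"
proof -
  obtain C where "\<And>t. \<bar>t\<bar> \<le> 1 \<Longrightarrow> norm (mexp (t *\<^sub>R (0 :: 'n cmat)) - mat 1 - t *\<^sub>R 0) \<le> C * t\<^sup>2"
    using mexp_quadratic_remainder[of 0] by blast
  from this[of 0] show ?thesis
    by simp
qed

lemma has_vector_derivative_mexp: "((\<lambda>t. mexp (t *\<^sub>R A)) has_vector_derivative (A::'n::finite cmat)) (at 0)"
proof -
  obtain C where "\<And>t. \<bar>t\<bar> \<le> 1 \<Longrightarrow> norm (mexp (t *\<^sub>R A) - mat 1 - t *\<^sub>R A) \<le> C * t\<^sup>2"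
    using mexp_quadratic_remainder[of A] by blast
  then show ?thesis
    by (intro has_vector_derivative_at_0_if_quadratic_remainder) simp
qed

definition skew_wrt :: "'n::finite cmat \<Rightarrow> 'n cmat \<Rightarrow> bool" where
  "skew_wrt T X \<longleftrightarrow> X ** T + T ** ctrans X = 0"

lemma skew_wrt_if_congruence_invariant:
  assumes E: "(E has_vector_derivative A) (at 0)" "E 0 = mat 1"
    and invariant: "\<And>t. congruence (E t) S = S"
  shows "skew_wrt S (ctrans A)"
proof -
  have "((\<lambda>t. ctrans (E t)) has_vector_derivative ctrans A) (at 0)"
    by (rule bounded_linear.has_vector_derivative[OF bounded_linear_ctrans E(1)])
  then have "((\<lambda>t. ctrans (E t) ** S) has_vector_derivative ctrans (E 0) ** 0 + ctrans A ** S) (at 0)"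
    by (rule bounded_bilinear.has_vector_derivative[OF bounded_bilinear_matrix_mult _ has_vector_derivative_const])
  then have "((\<lambda>t. ctrans (E t) ** S ** E t) has_vector_derivative
      (ctrans (E 0) ** S) ** A + (ctrans (E 0) ** 0 + ctrans A ** S) ** E 0) (at 0)"
    by (rule bounded_bilinear.has_vector_derivative[OF bounded_bilinear_matrix_mult _ E(1)])
  then have "((\<lambda>t. congruence (E t) S) has_vector_derivative ctrans A ** S + S ** A) (at 0)"
    using E(2) by (simp add: congruence_def add.commute)
  moreover have "((\<lambda>t. congruence (E t) S) has_vector_derivative 0) (at 0)"
    by (simp only: invariant has_vector_derivative_const)
  ultimately show ?thesis
    unfolding skew_wrt_def by (simp add: vector_derivative_unique_at)
qed

lemma lie_algebra_skew_wrt_ctrans: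
  assumes "\<And>g. g \<in> G \<Longrightarrow> congruence g S = S" "A \<in> lie_algebra G"
  shows "skew_wrt S (ctrans A)"
  using assms unfolding lie_algebra_def
  by (intro skew_wrt_if_congruence_invariant[OF has_vector_derivative_mexp]) auto

lemma lie_algebra_skew_wrt:
  assumes "\<And>g. g \<in> ctrans ` G \<Longrightarrow> congruence g T = T" "A \<in> lie_algebra G"
  shows "skew_wrt T A"
proof -
  have "skew_wrt T (ctrans (ctrans A))"
    using assms unfolding lie_algebra_def
    by (intro skew_wrt_if_congruence_invariant[where E = "\<lambda>t. ctrans (mexp (t *\<^sub>R A))"]
        bounded_linear.has_vector_derivative[OF bounded_linear_ctrans has_vector_derivative_mexp]) auto
  then show ?thesis
    by simp
qed

lemma skew_wrt_add: "skew_wrt T X \<Longrightarrow> skew_wrt T Y \<Longrightarrow> skew_wrt T (X + Y)"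
proof -
  have "(X + Y) ** T + T ** ctrans (X + Y) = (X ** T + T ** ctrans X) + (Y ** T + T ** ctrans Y)"
    by (simp add: matrix_ring_simps algebra_simps)
  then show "skew_wrt T X \<Longrightarrow> skew_wrt T Y \<Longrightarrow> skew_wrt T (X + Y)"
    by (simp add: skew_wrt_def)
qed

lemma skew_wrt_scaleR: "skew_wrt T X \<Longrightarrow> skew_wrt T (r *\<^sub>R X)"
proof -
  have "(r *\<^sub>R X) ** T + T ** ctrans (r *\<^sub>R X) = r *\<^sub>R (X ** T + T ** ctrans X)"
    by (simp add: matrix_ring_simps scaleR_add_right)
  then show "skew_wrt T X \<Longrightarrow> skew_wrt T (r *\<^sub>R X)"
    by (simp add: skew_wrt_def)
qed

lemma subspace_skew_wrt_pair: "subspace {A. skew_wrt T A \<and> skew_wrt S (ctrans A)}"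
  unfolding subspace_def by (simp add: skew_wrt_add skew_wrt_scaleR) (simp add: skew_wrt_def)

lemma skew_wrt_preserves_form:
  assumes "skew_wrt T \<beta>"
  shows "(X + X ** \<beta>) ** T ** ctrans (X + X ** \<beta>) = (X - X ** \<beta>) ** T ** ctrans (X - X ** \<beta>)"
proof -
  have "(X + X ** \<beta>) ** T ** ctrans (X + X ** \<beta>) - (X - X ** \<beta>) ** T ** ctrans (X - X ** \<beta>)
      = 2 *\<^sub>R (X ** (\<beta> ** T + T ** ctrans \<beta>) ** ctrans X)"
    by (simp add: matrix_ring_simps ctrans_matrix_mult algebra_simps scaleR_2)
  with assms show ?thesis
    by (simp add: skew_wrt_def)
qed

lemma midpoint_step_factorisation:
  assumes step: "midpoint_step J c gradH M h \<zeta> Q P Q' P'"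
    and V: "subspace V" "\<And>i X. i \<le> M \<Longrightarrow> gradH i X \<in> V"
  obtains Qt Pt \<beta> where "\<beta> \<in> V" "Q = Qt - Qt ** \<beta>" "Q' = Qt + Qt ** \<beta>"
    "P = Pt + Pt ** ctrans \<beta>" "P' = Pt - Pt ** ctrans \<beta>"
proof -
  obtain Qt Pt where
    "Q = Qt - (1/2) *\<^sub>R (h *\<^sub>R fvec J c gradH 0 Qt Pt + (\<Sum>i\<in>{1..M}. (\<zeta> i * sqrt h) *\<^sub>R fvec J c gradH i Qt Pt))"
    "P = Pt - (1/2) *\<^sub>R (h *\<^sub>R kvec J c gradH 0 Qt Pt + (\<Sum>i\<in>{1..M}. (\<zeta> i * sqrt h) *\<^sub>R kvec J c gradH i Qt Pt))"
    "Q' = Qt + (1/2) *\<^sub>R (h *\<^sub>R fvec J c gradH 0 Qt Pt + (\<Sum>i\<in>{1..M}. (\<zeta> i * sqrt h) *\<^sub>R fvec J c gradH i Qt Pt))"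
    "P' = Pt + (1/2) *\<^sub>R (h *\<^sub>R kvec J c gradH 0 Qt Pt + (\<Sum>i\<in>{1..M}. (\<zeta> i * sqrt h) *\<^sub>R kvec J c gradH i Qt Pt))"
    using step unfolding midpoint_step_def Let_def by blast
  moreover define g where "g i = gradH i (momentum J c Qt Pt)" for i
  moreover define \<beta> where "\<beta> = (1/4) *\<^sub>R (h *\<^sub>R g 0 + (\<Sum>i\<in>{1..M}. (\<zeta> i * sqrt h) *\<^sub>R g i))"
  moreover have "(1/2) *\<^sub>R (h *\<^sub>R fvec J c gradH 0 Qt Pt + (\<Sum>i\<in>{1..M}. (\<zeta> i * sqrt h) *\<^sub>R fvec J c gradH i Qt Pt))
      = Qt ** \<beta>"
    unfolding fvec_def \<beta>_def g_def
    by (simp add: matrix_add_ldistrib matrix_sum_ldistrib matrix_scalar_ac scalar_matrix_assoc[symmetric]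
        scaleR_sum_right scaleR_add_right)
  moreover have "(1/2) *\<^sub>R (h *\<^sub>R kvec J c gradH 0 Qt Pt + (\<Sum>i\<in>{1..M}. (\<zeta> i * sqrt h) *\<^sub>R kvec J c gradH i Qt Pt))
      = - (Pt ** ctrans \<beta>)"
    unfolding kvec_def \<beta>_def g_def
    by (simp add: matrix_add_ldistrib matrix_sum_ldistrib matrix_scalar_ac scalar_matrix_assoc[symmetric]
        scaleR_sum_right scaleR_add_right scaleR_diff_right ctrans_sum sum_negf)
  moreover have "\<beta> \<in> V"
    unfolding \<beta>_def g_def using V by (intro subspace_scale subspace_add subspace_sum) auto
  ultimately show thesis
    using that by simp
qed

lemma midpoint_step_preserves_forms:
  assumes "midpoint_step J c gradH M h \<zeta> Q P Q' P'"
    and "\<And>i X. i \<le> M \<Longrightarrow> skew_wrt T (gradH i X) \<and> skew_wrt S (ctrans (gradH i X))"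
  shows "Q' ** T ** ctrans Q' = Q ** T ** ctrans Q \<and> P' ** S ** ctrans P' = P ** S ** ctrans P"
proof -
  obtain Qt Pt \<beta> where "skew_wrt T \<beta>" "skew_wrt S (ctrans \<beta>)"
    "Q = Qt - Qt ** \<beta>" "Q' = Qt + Qt ** \<beta>" "P = Pt + Pt ** ctrans \<beta>" "P' = Pt - Pt ** ctrans \<beta>"
    using midpoint_step_factorisation[OF assms(1) subspace_skew_wrt_pair] assms(2) by blast
  then show ?thesis
    using skew_wrt_preserves_form[of T \<beta> Qt] skew_wrt_preserves_form[of S "ctrans \<beta>" Pt] by simp
qed

lemma integrator_seq_preserves_forms:
  assumes "integrator_seq J c gradH M l W h \<omega> Q P"
    and "\<And>i X. i \<le> M \<Longrightarrow> skew_wrt T (gradH i X) \<and> skew_wrt S (ctrans (gradH i X))"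
  shows "Q n ** T ** ctrans (Q n) = Q 0 ** T ** ctrans (Q 0) \<and> P n ** S ** ctrans (P n) = P 0 ** S ** ctrans (P 0)"
proof (induction n)
  case (Suc n)
  have "midpoint_step J c gradH M h (trunc_noise l W h \<omega> n) (Q n) (P n) (Q (Suc n)) (P (Suc n))"
    using assms(1) unfolding integrator_seq_def by blast
  with midpoint_step_preserves_forms[OF _ assms(2)] Suc show ?case
    by simp
qed simp

theorem lemma5p1:
  fixes G :: "'n::finite cmat set"
    and J :: "'n cmat" and c :: real
    and M :: nat and H :: "nat \<Rightarrow> 'n cmat \<Rightarrow> real" and gradH :: "nat \<Rightarrow> 'n cmat \<Rightarrow> 'n cmat"
    and l :: nat
    and PS :: "'a measure" and W :: "nat \<Rightarrow> real \<Rightarrow> 'a \<Rightarrow> real"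
    and Q0 P0 :: "'n cmat"
  assumes G_lie: "matrix_lie_group G"
    and G_compact: "compact G"
    and G_sc: "simply_connected G"
    and J_sym: "ctrans J = J \<or> ctrans J = - J"
    and J_sq: "J ** J = c *\<^sub>R mat 1" and c_nz: "c \<noteq> 0"
    and J_quad: "\<forall>A\<in>lie_algebra G. ctrans A ** J + J ** A = 0"
    and grad: "\<forall>i\<le>M. \<forall>X. gradH i X \<in> lie_algebra G \<and>
                 ((\<lambda>V. H i (X + V)) has_derivative (\<lambda>V. Re (frob (gradH i X) V)))
                   (at 0 within lie_algebra G)"
    and l_pos: "l \<ge> 1"
    and BM: "indep_brownian PS M W"
    and init: "Q0 \<in> G"
  shows "\<exists>R::real. AE \<omega> in PS. \<forall>h>0. \<forall>Q P.
           integrator_seq J c gradH M l W h \<omega> Q P \<and> Q 0 = Q0 \<and> P 0 = P0 \<longrightarrow>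
           (\<forall>n. norm (Q n, P n) \<le> R)"
proof -
  have G: "compact_matrix_group G"
    using G_lie G_compact by (rule matrix_lie_group_compact_imp_compact_matrix_group)
  obtain S \<epsilon>S where S: "\<epsilon>S > 0" "\<And>g. g \<in> G \<Longrightarrow> congruence g S = S"
    "\<And>X. \<epsilon>S * (norm X)\<^sup>2 \<le> Re (trace (X ** S ** ctrans X))"
    by (rule compact_matrix_group_invariant_form[OF G]) auto
  obtain T \<epsilon>T where T: "\<epsilon>T > 0" "\<And>g. g \<in> ctrans ` G \<Longrightarrow> congruence g T = T"
    "\<And>X. \<epsilon>T * (norm X)\<^sup>2 \<le> Re (trace (X ** T ** ctrans X))"
    by (rule compact_matrix_group_invariant_form[OF compact_matrix_group_ctrans_image[OF G]]) auto
  have skew: "skew_wrt T (gradH i X) \<and> skew_wrt S (ctrans (gradH i X))" if "i \<le> M" for i X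
    using grad[rule_format, OF that, THEN conjunct1]
    by (intro conjI lie_algebra_skew_wrt[OF T(2)] lie_algebra_skew_wrt_ctrans[OF S(2)])
  define R where "R = sqrt (Re (trace (Q0 ** T ** ctrans Q0)) / \<epsilon>T + Re (trace (P0 ** S ** ctrans P0)) / \<epsilon>S)"
  have "norm (Q n, P n) \<le> R"
    if "integrator_seq J c gradH M l W h \<omega> Q P" "Q 0 = Q0" "P 0 = P0" for h \<omega> Q P n
  proof -
    have "\<epsilon>T * (norm (Q n))\<^sup>2 \<le> Re (trace (Q0 ** T ** ctrans Q0))"
      "\<epsilon>S * (norm (P n))\<^sup>2 \<le> Re (trace (P0 ** S ** ctrans P0))"
      using T(3)[of "Q n"] S(3)[of "P n"] integrator_seq_preserves_forms[OF that(1) skew, of n] that(2,3)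
      by simp_all
    then show ?thesis
      unfolding R_def norm_prod_def using S(1) T(1)
      by (intro real_sqrt_le_mono add_mono) (simp_all add: pos_le_divide_eq mult.commute)
  qed
  then show ?thesis
    by (intro exI[of _ R] AE_I2) blast
qed

end
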